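(* The support of the invariant probability $\mu$ of the kernel $M$ is the whole segment $[0,1/2]$.
   Context: $M$ is the Markov kernel $M(x,\cdot)=\frac16\sum_{i=1}^6\delta_{z_i(x)}$ on $[0,1/2]$, where for $x\in[0,1/2]$: $z_1(x)=\frac{3x}{2+2x}$; $z_2(x)=\frac{3x}{2-x}$ if $x<2/7$ and $\frac{2-4x}{2-x}$ if $x\ge2/7$; $z_3(x)=\frac{1+x}{3-3x}$ if $x<1/5$ and $\frac{2-4x}{3-3x}$ if $x\ge1/5$; $z_4(x)=\frac{1+x}{4-2x}$; $z_5(x)=\frac{1-2x}{4-2x}$; $z_6(x)=\frac{1-2x}{3}$. $M$ has a unique invariant probability measure, denoted $\mu$. *)

theory Defs
  imports "HOL-Probability.Probability"
begin

definition z :: "nat \<Rightarrow> real \<Rightarrow> real" where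
  "z i x =
    (if i = 1 then 3*x / (2 + 2*x)
     else if i = 2 then (if x < 2/7 then 3*x / (2 - x) else (2 - 4*x) / (2 - x))
     else if i = 3 then (if x < 1/5 then (1 + x) / (3 - 3*x) else (2 - 4*x) / (3 - 3*x))
     else if i = 4 then (1 + x) / (4 - 2*x)
     else if i = 5 then (1 - 2*x) / (4 - 2*x)
     else (1 - 2*x) / 3)"

definition M :: "real \<Rightarrow> real set \<Rightarrow> real" where
  "M x A = (1/6) * (\<Sum>i\<in>{1..6}. indicator A (z i x))"

definition M_invariant_prob :: "real measure \<Rightarrow> bool" where
  "M_invariant_prob \<mu> \<longleftrightarrow>
     prob_space \<mu> \<and> sets \<mu> = sets borel \<and> emeasure \<mu> {0..1/2} = 1 \<and>
     (\<forall>A\<in>sets borel. measure \<mu> A = (\<integral>x. M x A \<partial>\<mu>))"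

definition measure_support :: "real measure \<Rightarrow> real set" where
  "measure_support \<mu> = {x. \<forall>U. open U \<and> x \<in> U \<longrightarrow> emeasure \<mu> U > 0}"

end

theory Submission
  imports Defs
begin

text \<open>The support of an invariant measure is a nonempty closed subset of [0,1/2] which contains
  z_i(u) whenever it contains a point u at which z_i is continuous, because
  \<open>\<mu>(U) \<ge> \<mu>(z_i\<^sup>-\<^sup>1 U)/6\<close>. The branches z_4 and z_5 are contractions of ratio 2/3 mapping
  [0,1/2] onto [1/4,1/2] and [0,1/4]: pulling a target point back n times and pushing a support
  point forward along the same branches shows that the support is (2/3)^n/2-dense in [0,1/2].\<close>

lemma closure_measure_support: "closure (measure_support \<mu>) \<subseteq> measure_support \<mu>"
proof
  fix x assume x: "x \<in> closure (measure_support \<mu>)"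
  have "emeasure \<mu> U > 0" if U: "open U" "x \<in> U" for U
  proof -
    obtain u where "u \<in> U" "u \<in> measure_support \<mu>"
      using x U open_Int_closure_eq_empty[of U "measure_support \<mu>"] by blast
    then show ?thesis using U by (simp add: measure_support_def)
  qed
  then show "x \<in> measure_support \<mu>" by (simp add: measure_support_def)
qed

lemma measure_support_subset_of_null_compl:
  assumes "closed C" "emeasure \<mu> (- C) = 0"
  shows "measure_support \<mu> \<subseteq> C"
  using assms by (auto simp: measure_support_def open_Compl)

lemma measure_support_Int_compact_nonempty:
  assumes "sets \<mu> = sets borel" "compact K" "emeasure \<mu> K > 0"
  shows "measure_support \<mu> \<inter> K \<noteq> {}"
proof
  assume empty: "measure_support \<mu> \<inter> K = {}"
  have "\<exists>U. open U \<and> x \<in> U \<and> emeasure \<mu> U = 0" if "x \<in> K" for x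
  proof -
    have "x \<notin> measure_support \<mu>" using empty that by blast
    then show ?thesis unfolding measure_support_def using not_gr_zero by blast
  qed
  then obtain U where U: "\<And>x. x \<in> K \<Longrightarrow> open (U x) \<and> x \<in> U x \<and> emeasure \<mu> (U x) = 0"
    by metis
  obtain C where C: "C \<subseteq> K" "finite C" "K \<subseteq> (\<Union>c\<in>C. U c)"
    by (rule compactE_image[OF \<open>compact K\<close>, where C=K and f=U]) (use U in auto)
  have sets_U: "U c \<in> sets \<mu>" if "c \<in> C" for c
    using U C(1) that assms(1) by auto
  have "emeasure \<mu> K \<le> emeasure \<mu> (\<Union>c\<in>C. U c)"
    by (rule emeasure_mono[OF C(3)]) (use sets_U C(2) in auto)
  also have "\<dots> \<le> (\<Sum>c\<in>C. emeasure \<mu> (U c))"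
    by (rule emeasure_subadditive_finite[OF C(2)]) (use sets_U in auto)
  also have "\<dots> = 0" using U C(1) by (auto intro!: sum.neutral)
  finally show False using assms(3) by simp
qed

lemma interval_subset_closure_of_contraction_invariant:
  fixes S :: "real set" and F :: "(real \<Rightarrow> real) set" and c :: real
  assumes "S \<noteq> {}" "S \<subseteq> {a..b}" "0 \<le> c" "c < 1"
    and invariant: "\<And>f u. f \<in> F \<Longrightarrow> u \<in> S \<Longrightarrow> f u \<in> S"
    and contraction: "\<And>f u x. f \<in> F \<Longrightarrow> u \<in> {a..b} \<Longrightarrow> x \<in> {a..b} \<Longrightarrow>
      \<bar>f u - f x\<bar> \<le> c * \<bar>u - x\<bar>"
    and covering: "\<And>y. y \<in> {a..b} \<Longrightarrow> \<exists>f\<in>F. \<exists>x\<in>{a..b}. f x = y"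
  shows "{a..b} \<subseteq> closure S"
proof -
  have approx: "\<exists>u\<in>S. \<bar>u - y\<bar> \<le> c ^ n * (b - a)" if "y \<in> {a..b}" for n y
    using that
  proof (induction n arbitrary: y)
    case 0
    then show ?case using assms(1,2) by (fastforce simp: abs_le_iff)
  next
    case (Suc n)
    obtain f x where f: "f \<in> F" "x \<in> {a..b}" "f x = y" using covering[OF Suc.prems] by blast
    obtain u where u: "u \<in> S" "\<bar>u - x\<bar> \<le> c ^ n * (b - a)" using Suc.IH[OF f(2)] by blast
    have "\<bar>f u - y\<bar> \<le> c * \<bar>u - x\<bar>"
      using contraction[OF f(1) _ f(2)] u(1) assms(2) f(3) by blast
    also have "\<dots> \<le> c ^ Suc n * (b - a)"
      using mult_left_mono[OF u(2) \<open>0 \<le> c\<close>] by (simp add: mult.assoc)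
    finally show ?case using invariant[OF f(1) u(1)] by blast
  qed
  show ?thesis
  proof
    fix y assume y: "y \<in> {a..b}"
    have "\<exists>u\<in>S. dist u y < \<epsilon>" if "\<epsilon> > 0" for \<epsilon>
    proof -
      have "(\<lambda>n. c ^ n * (b - a)) \<longlonglongrightarrow> 0 * (b - a)"
        by (intro tendsto_intros LIMSEQ_power_zero) (use assms(3,4) in auto)
      then have "\<forall>\<^sub>F n in sequentially. c ^ n * (b - a) < \<epsilon>"
        using \<open>\<epsilon> > 0\<close> by (auto dest: order_tendstoD(2))
      then obtain n where "c ^ n * (b - a) < \<epsilon>"
        by (auto simp: eventually_sequentially)
      with approx[OF y, of n] show ?thesis by (force simp: dist_real_def)
    qed
    then show "y \<in> closure S" by (simp add: closure_approachable)
  qed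
qed

lemma z4_eq: "z 4 x = (1 + x) / (4 - 2*x)"
  by (simp add: z_def)

lemma z5_eq_half_minus_z4:
  assumes "x \<noteq> 2"
  shows "z 5 x = 1/2 - z 4 x"
  using assms by (simp add: z_def field_simps)

lemma z4_contraction:
  assumes "u \<in> {0..1/2}" "x \<in> {0..1/2}"
  shows "\<bar>z 4 u - z 4 x\<bar> \<le> 2/3 * \<bar>u - x\<bar>"
proof -
  have "9 \<le> (4 - 2*u) * (4 - 2*x)"
    using mult_mono[of 3 "4 - 2*u" 3 "4 - 2*x"] assms by auto
  then have pos: "0 < (4 - 2*u) * (4 - 2*x)" by linarith
  have "z 4 u - z 4 x = 6 * (u - x) / ((4 - 2*u) * (4 - 2*x))"
    using assms by (simp add: z4_eq field_simps)
  then have "\<bar>z 4 u - z 4 x\<bar> = 6 * \<bar>u - x\<bar> / ((4 - 2*u) * (4 - 2*x))"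
    by (simp only: abs_divide abs_mult[of 6 "u - x"] abs_of_pos[OF pos] abs_numeral)
  also have "\<dots> \<le> 6 * \<bar>u - x\<bar> / 9"
    using \<open>9 \<le> _\<close> by (intro divide_left_mono) auto
  finally show ?thesis by simp
qed

lemma z5_contraction:
  assumes "u \<in> {0..1/2}" "x \<in> {0..1/2}"
  shows "\<bar>z 5 u - z 5 x\<bar> \<le> 2/3 * \<bar>u - x\<bar>"
  using z4_contraction[OF assms] assms by (simp add: z5_eq_half_minus_z4 abs_minus_commute)

lemma z4_z5_cover:
  assumes "y \<in> {0..1/2}"
  shows "\<exists>f\<in>{z 4, z 5}. \<exists>x\<in>{0..1/2}. f x = y"
proof (cases "1/4 \<le> y")
  case True
  define x where "x = (4*y - 1) / (1 + 2*y)"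
  have "x \<in> {0..1/2}" "z 4 x = y"
    using True assms by (auto simp: x_def z4_eq field_simps)
  then show ?thesis by blast
next
  case False
  define x where "x = (1 - 4*y) / (2 - 2*y)"
  have "x \<in> {0..1/2}" "z 5 x = y"
    using False assms by (auto simp: x_def z_def field_simps)
  then show ?thesis by blast
qed

lemma isCont_z4_z5:
  assumes "f \<in> {z 4, z 5}" "x \<in> {0..1/2}"
  shows "isCont f x"
  using assms unfolding z_def by (auto intro!: continuous_intros)

lemma M_nonneg: "0 \<le> M x A"
  by (simp add: M_def sum_nonneg)

lemma M_le_1: "M x A \<le> 1"
proof -
  have "(\<Sum>i\<in>{1..6::nat}. indicator A (z i x)) \<le> (\<Sum>i\<in>{1..6::nat}. 1 :: real)"
    by (intro sum_mono) (simp add: indicator_def)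
  then show ?thesis by (simp add: M_def)
qed

lemma indicator_z_le_M:
  assumes "i \<in> {1..6}"
  shows "indicator A (z i x) \<le> 6 * M x A"
  using member_le_sum[OF assms, of "\<lambda>j. indicator A (z j x) :: real"]
  by (simp add: M_def)

lemma borel_measurable_M:
  assumes [measurable]: "A \<in> sets borel"
  shows "(\<lambda>x. M x A) \<in> borel_measurable borel"
proof -
  have [measurable]: "z i \<in> borel_measurable borel" for i
    unfolding z_def by measurable
  show ?thesis unfolding M_def by measurable
qed

lemma M_invariant_prob_support_branch:
  assumes inv: "M_invariant_prob \<mu>"
    and u: "u \<in> measure_support \<mu>" and i: "i \<in> {1..6}" and cont: "isCont (z i) u"
  shows "z i u \<in> measure_support \<mu>"
proof -
  interpret prob_space \<mu> using inv by (simp add: M_invariant_prob_def)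
  have sets_eq: "sets \<mu> = sets borel"
    and invariance: "\<And>A. A \<in> sets borel \<Longrightarrow> measure \<mu> A = (\<integral>x. M x A \<partial>\<mu>)"
    using inv unfolding M_invariant_prob_def by blast+
  have "emeasure \<mu> U > 0" if U: "open U" "z i u \<in> U" for U
  proof -
    obtain V where V: "open V" "u \<in> V" "\<And>x. x \<in> V \<Longrightarrow> z i x \<in> U"
      using continuous_at_open[THEN iffD1, OF cont, rule_format, of U] U by auto
    have "measure \<mu> V > 0"
      using u V(1,2) by (simp add: measure_support_def emeasure_eq_measure)
    have "(\<lambda>x. M x U) \<in> borel_measurable \<mu>"
      using borel_measurable_M[of U] U(1) by (subst measurable_cong_sets[OF sets_eq refl]) simp
    then have M_integrable: "integrable \<mu> (\<lambda>x. M x U)"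
      using M_nonneg M_le_1 by (intro integrable_const_bound[where B=1]) auto
    have "measure \<mu> V = (\<integral>x. indicator V x \<partial>\<mu>)"
      using V(1) sets_eq by simp
    also have "\<dots> \<le> (\<integral>x. 6 * M x U \<partial>\<mu>)"
    proof (rule integral_mono)
      show "integrable \<mu> (\<lambda>x. indicator V x :: real)"
        using V(1) sets_eq by (intro integrable_real_indicator) (auto simp: less_top[symmetric])
      show "integrable \<mu> (\<lambda>x. 6 * M x U)" using M_integrable by simp
      show "indicator V x \<le> 6 * M x U" for x
        using indicator_z_le_M[OF i, of U x] V(3)[of x] M_nonneg[of x U]
        by (auto simp: indicator_def)
    qed
    also have "\<dots> = 6 * measure \<mu> U"
      using invariance[of U] U(1) by simp
    finally show ?thesis
      using \<open>measure \<mu> V > 0\<close> by (simp add: emeasure_eq_measure)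
  qed
  then show ?thesis by (simp add: measure_support_def)
qed

theorem lemma17:
  assumes "M_invariant_prob \<mu>"
  shows "measure_support \<mu> = {0..1/2}"
proof -
  interpret prob_space \<mu> using assms by (simp add: M_invariant_prob_def)
  have sets_eq: "sets \<mu> = sets borel" and full: "emeasure \<mu> {0..1/2} = 1"
    using assms unfolding M_invariant_prob_def by blast+
  have "emeasure \<mu> (- {0..1/2}) = 0"
    using prob_compl[of "{0..1/2}"] full sets_eq sets_eq_imp_space_eq[OF sets_eq]
    by (simp add: emeasure_eq_measure Compl_eq_Diff_UNIV)
  then have sub: "measure_support \<mu> \<subseteq> {0..1/2}"
    by (intro measure_support_subset_of_null_compl) auto
  have "measure_support \<mu> \<noteq> {}"
    using measure_support_Int_compact_nonempty[OF sets_eq, of "{0..1/2}"] full by auto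
  moreover have "f u \<in> measure_support \<mu>" if "f \<in> {z 4, z 5}" "u \<in> measure_support \<mu>" for f u
    using that sub isCont_z4_z5[OF that(1)]
      M_invariant_prob_support_branch[OF assms that(2), of 4]
      M_invariant_prob_support_branch[OF assms that(2), of 5] by auto
  ultimately have "{0..1/2} \<subseteq> closure (measure_support \<mu>)"
    using sub z4_contraction z5_contraction z4_z5_cover
    by (intro interval_subset_closure_of_contraction_invariant[where F="{z 4, z 5}" and c="2/3"])
       auto
  then show ?thesis
    using sub closure_measure_support[of \<mu>] by blast
qed

end
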